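(* Let $(\mathcal{H},\langle\cdot,\cdot\rangle)$ be a real Hilbert space with induced norm $\lVert\cdot\rVert$, let $\tau,\tau_s>0$, $\alpha>0$, let $g\in\mathcal{C}^0(\mathbb{R}_{\geq0},\mathbb{R}_{\geq0})$ be monotone increasing with $g(0)=0$, and let $V\in\mathcal{C}^1(\mathbb{R}^2,\mathbb{R})$. Let $\mathbf{u}\in\mathcal{H}\setminus\{0\}$ be constant and let $(\mathbf{x}(t),x_s(t))$ be a solution of $$\tau\dot{\mathbf{x}}=-\frac{\partial}{\partial\mathbf{x}}V(\lVert\mathbf{x}\rVert,x_s)+\alpha\mathbf{u},\qquad \tau_s\dot{x}_s=-x_s+g(\lVert\mathbf{x}\rVert)$$ with initial condition $(\mathbf{x}_0,x_{s,0})$. Then at every time where $\mathbf{x}\neq0$, $$\frac{\tau}{\alpha}\frac{d}{dt}\cos(\mathbf{x},\mathbf{u})=\frac{\lVert\mathbf{u}\rVert}{\lVert\mathbf{x}\rVert}\bigl(1-\cos^2(\mathbf{x},\mathbf{u})\bigr),$$ and, for $t\geq0$ such that $\mathbf{x}(s)\neq0$ for all $s\in[0,t]$ and $\cos(\mathbf{x}_0,\mathbf{u})\in(-1,1)$, the unique solution of this Riccati equation is $$\cos(\mathbf{x}(t),\mathbf{u})=\tanh\Bigl(\frac{\alpha\lVert\mathbf{u}\rVert}{\tau}\int_0^t\lVert\mathbf{x}(s)\rVert^{-1}\,ds+c_0\Bigr),\qquad c_0=\tanh^{-1}\bigl(\cos(\mathbf{x}_0,\mathbf{u})\bigr).$$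 In particular, suppose in addition that $x_{s,0}\geq0$, that there exist constants $a>0$, $b\geq0$ and an increasing $h\in\mathcal{C}^0(\mathbb{R}_{\geq0},\mathbb{R}_{\geq0})$ with $h(0)=0$ such that $ar-b\leq\frac{\partial}{\partial r}V(r,x_s)$ for all $r\geq0,x_s\geq0$ and $\frac{\partial}{\partial r}V(r,x_s)\leq h(\overline r)r$ for all $\overline r\geq0$, $r\in[0,\overline r]$, $x_s\in[0,|x_{s,0}|+g(\overline r)]$, and that $\lVert\mathbf{u}\rVert>b/\alpha$. Then $\lim_{t\to+\infty}\cos(\mathbf{x}(t),\mathbf{u})=1$.
   Context: $\frac{\partial}{\partial\mathbf{x}}V(\lVert\mathbf{x}\rVert,x_s)$ denotes the gradient in $\mathcal{H}$ of $\mathbf{x}\mapsto V(\lVert\mathbf{x}\rVert,x_s)$, equal to $\frac{\partial V}{\partial r}(\lVert\mathbf{x}\rVert,x_s)\,\mathbf{x}/\lVert\mathbf{x}\rVert$ for $\mathbf{x}\neq0$. For nonzero $\mathbf{x},\mathbf{u}$, $\cos(\mathbf{x},\mathbf{u})\triangleq\frac{\langle\mathbf{u},\mathbf{x}\rangle}{\lVert\mathbf{u}\rVert\lVert\mathbf{x}\rVert}$. Standing assumptions: solutions exist on $\mathbb{R}_{\geq0}$ for all initial conditions in $\mathcal{H}\times\mathbb{R}_{\geq0}$; moreover the scalar system $\dot r=-\frac{\partial}{\partial r}V(r,x_s)$ has an equilibrium at $r=0$ undergoing a subcritical pitchfork bifurcation at some $x_s=\underline x_s$ (there is $\overline x_s>\underline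 x_s$ such that: for $x_s<\underline x_s$ there are two locally asymptotically stable equilibria $\pm r^*$; for $\underline x_s<x_s<\overline x_s$ there are three locally asymptotically stable equilibria $-r^*,0,r^*$ with $\partial r^*/\partial x_s<0$; for $x_s>\overline x_s$, $r=0$ is globally asymptotically stable). *)

theory Defs
  imports "HOL-Analysis.Analysis"
begin

definition cosine :: "'a::real_inner \<Rightarrow> 'a \<Rightarrow> real" where
  "cosine x u = inner u x / (norm u * norm x)"

text \<open>Gradient in H of the map x \<mapsto> V(norm x, xs), where Vr is the partial derivative of
  V with respect to its first (radial) argument.\<close>
definition radial_grad :: "(real \<times> real \<Rightarrow> real) \<Rightarrow> 'a::real_normed_vector \<Rightarrow> real \<Rightarrow> 'a" where
  "radial_grad Vr x xs = (if x = 0 then 0 else (Vr (norm x, xs) / norm x) *\<^sub>R x)"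

end

theory Submission
  imports Defs "HOL-Real_Asymp.Real_Asymp"
begin

(* With k = Vr(|x|, xs) / |x| the equation for x reads tau x' = alpha u - k x. The radial term
   only rescales x, so the cosine c of the angle between x and u obeys the Riccati equation
   tau c' = alpha |u| / |x| (1 - c^2), which is solved by tanh of an integral.
   For the limit, the lower bound on Vr keeps |x| below some R, and while <u, x> <= 0 it forces
   <u, x> to grow at least at the rate |u| (alpha |u| - b) / tau > 0. Once positive, <u, x> stays
   positive by the upper bound on Vr, and then 1 - c decays like exp (- alpha |u| t / (tau R)). *)

lemma tanh_artanh_real:
  fixes z :: real
  assumes "-1 < z" "z < 1"
  shows "tanh (artanh z) = z"
proof -
  have "- 2 * artanh z = ln ((1 - z) / (1 + z))"
    using assms by (simp add: artanh_def ln_div)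
  then have exp_eq: "exp (- 2 * artanh z) = (1 - z) / (1 + z)"
    using assms by simp
  show ?thesis
    unfolding tanh_real_altdef exp_eq using assms by (simp add: field_simps)
qed

lemma abs_cosine_le_1: "\<bar>cosine x u\<bar> \<le> 1"
  using Cauchy_Schwarz_ineq2[of u x]
  by (cases "u = 0 \<or> x = 0") (auto simp: cosine_def abs_div divide_le_eq_1)

lemma cosine_pos: "inner u x > 0 \<Longrightarrow> cosine x u > 0"
  by (cases "u = 0 \<or> x = 0") (auto simp: cosine_def intro!: divide_pos_pos)

lemma has_real_derivative_inner_right:
  assumes "(x has_vector_derivative x') F"
  shows "((\<lambda>s. inner u (x s)) has_real_derivative inner u x') F"
  unfolding has_field_derivative_def
  using has_derivative_inner_right[OF assms[unfolded has_vector_derivative_def], of u]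
  by (rule has_derivative_eq_rhs) auto

lemma has_real_derivative_norm_squared:
  assumes "(x has_vector_derivative x') (at t within S)"
  shows "((\<lambda>s. (norm (x s))\<^sup>2) has_real_derivative 2 * inner (x t) x') (at t within S)"
proof -
  have x_deriv: "(x has_derivative (\<lambda>h. h *\<^sub>R x')) (at t within S)"
    using assms unfolding has_vector_derivative_def .
  have "((\<lambda>s. inner (x s) (x s)) has_derivative
      (\<lambda>h. inner (x t) (h *\<^sub>R x') + inner (h *\<^sub>R x') (x t))) (at t within S)"
    using has_derivative_inner[OF x_deriv x_deriv] .
  then show ?thesis
    unfolding has_field_derivative_def power2_norm_eq_inner
    by (rule has_derivative_eq_rhs) (auto simp: inner_commute fun_eq_iff)
qed

lemma has_real_derivative_norm:
  assumes "(x has_vector_derivative x') (at t within S)" "x t \<noteq> 0"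
  shows "((\<lambda>s. norm (x s)) has_real_derivative inner (x t) x' / norm (x t)) (at t within S)"
  unfolding has_field_derivative_def
  using has_derivative_compose[OF assms(1)[unfolded has_vector_derivative_def]
      has_derivative_norm[OF assms(2)]]
  by (rule has_derivative_eq_rhs)
    (use assms(2) in \<open>auto simp: sgn_div_norm inner_commute fun_eq_iff field_simps\<close>)

lemma DERIV_nonpos_imp_le_initial:
  fixes f D :: "real \<Rightarrow> real"
  assumes deriv: "\<And>s. s \<ge> t0 \<Longrightarrow> (f has_real_derivative D s) (at s within {t0..})"
    and nonpos: "\<And>s. t0 < s \<Longrightarrow> s < t \<Longrightarrow> D s \<le> 0"
    and "t0 \<le> t"
  shows "f t \<le> f t0"
proof (rule DERIV_nonpos_imp_decreasing_open[OF \<open>t0 \<le> t\<close>])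
  have "continuous_on {t0..} f"
    using deriv by (intro DERIV_continuous_on) auto
  then show "continuous_on {t0..t} f"
    by (rule continuous_on_subset) auto
next
  fix s assume "t0 < s" "s < t"
  then have "(f has_real_derivative D s) (at s)"
    using deriv[of s] at_within_interior[of s "{t0..}"] by simp
  with nonpos show "\<exists>y. (f has_real_derivative y) (at s) \<and> y \<le> 0"
    using \<open>t0 < s\<close> \<open>s < t\<close> by blast
qed

lemma DERIV_nonpos_above_imp_le_max:
  fixes f D :: "real \<Rightarrow> real"
  assumes deriv: "\<And>s. s \<ge> t0 \<Longrightarrow> (f has_real_derivative D s) (at s within {t0..})"
    and nonpos_above: "\<And>s. t0 < s \<Longrightarrow> f s > K \<Longrightarrow> D s \<le> 0"
    and "t0 \<le> t"
  shows "f t \<le> max (f t0) K"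
proof (rule ccontr)
  define M where "M = max (f t0) K"
  assume "\<not> f t \<le> max (f t0) K"
  then have ft: "f t > M" unfolding M_def by linarith
  define S where "S = {t0..t} \<inter> f -` {..M}"
  have "continuous_on {t0..} f"
    using deriv by (intro DERIV_continuous_on) auto
  then have "continuous_on {t0..t} f"
    by (rule continuous_on_subset) auto
  then have "closed S"
    unfolding S_def by (intro continuous_closed_preimage) auto
  moreover have "t0 \<in> S" "bdd_above S"
    using \<open>t0 \<le> t\<close> unfolding S_def M_def by auto
  ultimately have "Sup S \<in> S"
    using closed_contains_Sup by blast
  define s where "s = Sup S"
  have s: "t0 \<le> s" "s \<le> t" "f s \<le> M"
    using \<open>Sup S \<in> S\<close> unfolding s_def S_def by auto
  have above: "f r > M" if "s < r" "r \<le> t" for r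
    using cSup_upper[OF _ \<open>bdd_above S\<close>, of r] that s unfolding s_def S_def by force
  \<comment> \<open>after the last time s at which f is at most M, f only decreases\<close>
  have "f t \<le> f s"
  proof (rule DERIV_nonpos_imp_le_initial[of s f D t])
    show "(f has_real_derivative D r) (at r within {s..})" if "r \<ge> s" for r
      using deriv[of r] that s by (auto intro: DERIV_subset)
    show "D r \<le> 0" if "s < r" "r < t" for r
      using nonpos_above[of r] above[of r] that s unfolding M_def by auto
  qed (use s in auto)
  with s ft show False by simp
qed

lemma DERIV_le_neg_mult_imp_exp_decay:
  fixes f D :: "real \<Rightarrow> real"
  assumes deriv: "\<And>s. s \<ge> t0 \<Longrightarrow> (f has_real_derivative D s) (at s within {t0..})"
    and decay: "\<And>s. t0 < s \<Longrightarrow> D s \<le> - \<kappa> * f s"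
    and "t0 \<le> t"
  shows "f t \<le> f t0 * exp (- \<kappa> * (t - t0))"
proof -
  have "f t * exp (\<kappa> * t) \<le> f t0 * exp (\<kappa> * t0)"
  proof (rule DERIV_nonpos_imp_le_initial[where f="\<lambda>s. f s * exp (\<kappa> * s)"])
    show "((\<lambda>s. f s * exp (\<kappa> * s)) has_real_derivative
        (D s + \<kappa> * f s) * exp (\<kappa> * s)) (at s within {t0..})" if "s \<ge> t0" for s
      using deriv[OF that] by (auto intro!: derivative_eq_intros simp: algebra_simps)
    show "(D s + \<kappa> * f s) * exp (\<kappa> * s) \<le> 0" if "t0 < s" "s < t" for s
      using decay[of s] that by (simp add: mult_nonpos_nonneg)
  qed (use \<open>t0 \<le> t\<close> in auto)
  then have "f t * exp (\<kappa> * t) * exp (- \<kappa> * t)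
      \<le> f t0 * exp (\<kappa> * t0) * exp (- \<kappa> * t)"
    by (rule mult_right_mono) simp
  then show ?thesis
    by (simp add: mult.assoc exp_add[symmetric] algebra_simps)
qed

lemma riccati_solution_unique:
  fixes c f r :: "real \<Rightarrow> real"
  assumes r_cont: "continuous_on {t0..t} r"
    and c_deriv: "\<And>s. s \<in> {t0..t} \<Longrightarrow>
      (c has_real_derivative r s * (1 - (c s)\<^sup>2)) (at s within {t0..t})"
    and f_deriv: "\<And>s. s \<in> {t0..t} \<Longrightarrow>
      (f has_real_derivative r s * (1 - (f s)\<^sup>2)) (at s within {t0..t})"
    and "c t0 = f t0" "t0 \<le> t"
  shows "c t = f t"
proof -
  define q where "q s = r s * (c s + f s)" for s
  have "continuous_on {t0..t} q"
    unfolding q_def using r_cont DERIV_continuous_on[OF c_deriv] DERIV_continuous_on[OF f_deriv]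
    by (intro continuous_intros)
  then have q_int: "((\<lambda>s. integral {t0..s} q) has_real_derivative q s) (at s within {t0..t})"
    if "s \<in> {t0..t}" for s
    using integral_has_real_derivative that by blast
  \<comment> \<open>c - f solves y' = - q y, so exp (integral q) is an integrating factor\<close>
  define G where "G s = (c s - f s) * exp (integral {t0..s} q)" for s
  have "(G has_real_derivative 0) (at s within {t0..t})" if "s \<in> {t0..t}" for s
  proof -
    have "(G has_real_derivative (r s * (1 - (c s)\<^sup>2) - r s * (1 - (f s)\<^sup>2)) * exp (integral {t0..s} q)
        + (c s - f s) * (exp (integral {t0..s} q) * q s)) (at s within {t0..t})"
      unfolding G_def using c_deriv[OF that] f_deriv[OF that] q_int[OF that]
      by (auto intro!: derivative_eq_intros)
    then show ?thesis
      by (simp add: q_def algebra_simps power2_eq_square)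
  qed
  then obtain C where "\<forall>s\<in>{t0..t}. G s = C"
    using has_field_derivative_zero_constant[of "{t0..t}" G] by (auto simp: convex_real_interval)
  then have "G t = G t0"
    using \<open>t0 \<le> t\<close> by auto
  then show ?thesis
    using \<open>c t0 = f t0\<close> by (simp add: G_def)
qed

lemma tanh_integral_has_real_derivative:
  fixes r :: "real \<Rightarrow> real"
  assumes "continuous_on {t0..t} r" "s \<in> {t0..t}"
  shows "((\<lambda>s. tanh (K * integral {t0..s} r + A)) has_real_derivative
      K * r s * (1 - (tanh (K * integral {t0..s} r + A))\<^sup>2)) (at s within {t0..t})"
  using integral_has_real_derivative[OF assms]
  by (auto intro!: derivative_eq_intros simp: power2_eq_square)

lemma first_order_lag_nonneg:
  fixes y w :: "real \<Rightarrow> real"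
  assumes "\<tau> > 0"
    and deriv: "\<And>t. t \<ge> 0 \<Longrightarrow>
      (y has_real_derivative (1 / \<tau>) * (- y t + w t)) (at t within {0..})"
    and w_nonneg: "\<And>t. t \<ge> 0 \<Longrightarrow> w t \<ge> 0" and "y 0 \<ge> 0" and "t \<ge> 0"
  shows "y t \<ge> 0"
proof -
  have "- y t \<le> - y 0 * exp (- (1 / \<tau>) * (t - 0))"
  proof (rule DERIV_le_neg_mult_imp_exp_decay[of 0 "\<lambda>s. - y s"])
    show "((\<lambda>s. - y s) has_real_derivative - ((1 / \<tau>) * (- y s + w s))) (at s within {0..})"
      if "s \<ge> 0" for s
      using deriv[OF that] by (rule DERIV_minus)
    show "- ((1 / \<tau>) * (- y s + w s)) \<le> - (1 / \<tau>) * - y s" if "0 < s" for s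
      using w_nonneg[of s] \<open>\<tau> > 0\<close> that by (simp add: field_simps)
  qed (rule \<open>t \<ge> 0\<close>)
  moreover have "- y 0 * exp (- (1 / \<tau>) * (t - 0)) \<le> 0"
    using \<open>y 0 \<ge> 0\<close> by simp
  ultimately show ?thesis
    by linarith
qed

lemma first_order_lag_le:
  fixes y w :: "real \<Rightarrow> real"
  assumes "\<tau> > 0"
    and deriv: "\<And>t. t \<ge> 0 \<Longrightarrow>
      (y has_real_derivative (1 / \<tau>) * (- y t + w t)) (at t within {0..})"
    and w_le: "\<And>t. t \<ge> 0 \<Longrightarrow> w t \<le> W" and "W \<ge> 0" and "t \<ge> 0"
  shows "y t \<le> \<bar>y 0\<bar> + W"
proof -
  have "y t - W \<le> (y 0 - W) * exp (- (1 / \<tau>) * (t - 0))"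
  proof (rule DERIV_le_neg_mult_imp_exp_decay[of 0 "\<lambda>s. y s - W"])
    show "((\<lambda>s. y s - W) has_real_derivative (1 / \<tau>) * (- y s + w s)) (at s within {0..})"
      if "s \<ge> 0" for s
      using deriv[OF that] by (auto intro!: derivative_eq_intros)
    show "(1 / \<tau>) * (- y s + w s) \<le> - (1 / \<tau>) * (y s - W)" if "0 < s" for s
      using w_le[of s] \<open>\<tau> > 0\<close> that by (simp add: field_simps)
  qed (rule \<open>t \<ge> 0\<close>)
  moreover have "(y 0 - W) * exp (- (1 / \<tau>) * (t - 0)) \<le> max (y 0 - W) 0"
    using \<open>\<tau> > 0\<close> \<open>t \<ge> 0\<close>
    by (cases "y 0 - W \<ge> 0") (auto simp: mult_nonpos_nonneg mult_left_le)
  ultimately show ?thesis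
    using \<open>W \<ge> 0\<close> by auto
qed

locale biased_radial_flow =
  fixes Vr :: "real \<times> real \<Rightarrow> real"
    and x :: "real \<Rightarrow> 'a::real_inner"
    and xs :: "real \<Rightarrow> real"
    and u :: 'a
    and \<tau> \<alpha> :: real
  assumes tau_pos: "\<tau> > 0" and alpha_pos: "\<alpha> > 0" and u_nz: "u \<noteq> 0"
    and ode_x: "\<forall>t\<ge>0. (x has_vector_derivative
                  (1 / \<tau>) *\<^sub>R (- radial_grad Vr (x t) (xs t) + \<alpha> *\<^sub>R u)) (at t within {0..})"
begin

definition gain :: "real \<Rightarrow> real" where
  "gain t = (if x t = 0 then 0 else Vr (norm (x t), xs t) / norm (x t))"

lemma x_deriv:
  assumes "t \<ge> 0"
  shows "(x has_vector_derivative (\<alpha> / \<tau>) *\<^sub>R u - (gain t / \<tau>) *\<^sub>R x t)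
    (at t within {0..})"
proof -
  have "(1 / \<tau>) *\<^sub>R (- radial_grad Vr (x t) (xs t) + \<alpha> *\<^sub>R u)
      = (\<alpha> / \<tau>) *\<^sub>R u - (gain t / \<tau>) *\<^sub>R x t"
    by (simp add: radial_grad_def gain_def algebra_simps)
  then show ?thesis
    using ode_x assms by metis
qed

lemma continuous_on_x: "continuous_on {0..} x"
  using x_deriv by (intro continuous_on_vector_derivative) auto

lemma inner_u_deriv:
  assumes "t \<ge> 0"
  shows "((\<lambda>s. inner u (x s)) has_real_derivative
      (\<alpha> * (norm u)\<^sup>2 - gain t * inner u (x t)) / \<tau>) (at t within {0..})"
  using has_real_derivative_inner_right[OF x_deriv[OF assms]]
  by (simp add: inner_diff_right power2_norm_eq_inner diff_divide_distrib)

lemma norm_squared_deriv: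
  assumes "t \<ge> 0"
  shows "((\<lambda>s. (norm (x s))\<^sup>2) has_real_derivative
      2 * (\<alpha> * inner u (x t) - Vr (norm (x t), xs t) * norm (x t)) / \<tau>) (at t within {0..})"
proof (rule DERIV_cong[OF has_real_derivative_norm_squared[OF x_deriv[OF assms]]])
  have "gain t * (norm (x t))\<^sup>2 = Vr (norm (x t), xs t) * norm (x t)"
    by (simp add: gain_def power2_eq_square)
  then show "2 * inner (x t) ((\<alpha> / \<tau>) *\<^sub>R u - (gain t / \<tau>) *\<^sub>R x t)
      = 2 * (\<alpha> * inner u (x t) - Vr (norm (x t), xs t) * norm (x t)) / \<tau>"
    by (simp add: inner_diff_right inner_commute power2_norm_eq_inner diff_divide_distrib)
qed

lemma cosine_deriv:
  assumes "t \<ge> 0" "x t \<noteq> 0"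
  shows "((\<lambda>s. cosine (x s) u) has_real_derivative
      \<alpha> * norm u / (\<tau> * norm (x t)) * (1 - (cosine (x t) u)\<^sup>2)) (at t within {0..})"
proof -
  define \<rho> where "\<rho> = norm (x t)"
  define p where "p = inner u (x t)"
  have "\<rho> > 0"
    using assms(2) unfolding \<rho>_def by simp
  have gain_t: "gain t = Vr (\<rho>, xs t) / \<rho>"
    using assms(2) by (simp add: gain_def \<rho>_def)
  have "((\<lambda>s. norm (x s)) has_real_derivative (\<alpha> * p / \<rho> - Vr (\<rho>, xs t)) / \<tau>)
      (at t within {0..})"
  proof (rule DERIV_cong[OF has_real_derivative_norm[OF x_deriv[OF assms(1)] assms(2)]])
    have "inner (x t) (x t) = \<rho>\<^sup>2"
      by (simp add: \<rho>_def power2_norm_eq_inner)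
    then show "inner (x t) ((\<alpha> / \<tau>) *\<^sub>R u - (gain t / \<tau>) *\<^sub>R x t) / norm (x t)
        = (\<alpha> * p / \<rho> - Vr (\<rho>, xs t)) / \<tau>"
      using \<open>\<rho> > 0\<close> tau_pos
      by (simp add: gain_t inner_diff_right inner_commute p_def \<rho>_def[symmetric] field_simps power2_eq_square)
  qed
  then have "((\<lambda>s. cosine (x s) u) has_real_derivative
      ((\<alpha> * (norm u)\<^sup>2 - gain t * p) / \<tau> * (norm u * \<rho>)
        - p * (norm u * ((\<alpha> * p / \<rho> - Vr (\<rho>, xs t)) / \<tau>))) / (norm u * \<rho>)\<^sup>2)
      (at t within {0..})"
    unfolding cosine_def using inner_u_deriv[OF assms(1)] \<open>\<rho> > 0\<close> u_nz
    by (auto intro!: derivative_eq_intros simp: \<rho>_def p_def power2_eq_square)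
  then show ?thesis
    using \<open>\<rho> > 0\<close> u_nz tau_pos
    by (simp add: gain_t cosine_def \<rho>_def[symmetric] p_def[symmetric] field_simps power2_eq_square)
qed

lemma cosine_eq_tanh_integral:
  assumes "t \<ge> 0" and nz: "\<forall>s\<in>{0..t}. x s \<noteq> 0" and "cosine (x 0) u \<in> {-1<..<1}"
  shows "cosine (x t) u = tanh (\<alpha> * norm u / \<tau> * integral {0..t} (\<lambda>s. 1 / norm (x s))
      + artanh (cosine (x 0) u))"
proof -
  define K where "K = \<alpha> * norm u / \<tau>"
  define r where "r = (\<lambda>s. 1 / norm (x s))"
  define c0 where "c0 = artanh (cosine (x 0) u)"
  have "continuous_on {0..t} x"
    using continuous_on_x by (rule continuous_on_subset) auto
  then have r_cont: "continuous_on {0..t} r"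
    unfolding r_def using nz by (intro continuous_intros) auto
  have "cosine (x t) u = tanh (K * integral {0..t} r + c0)"
  proof (rule riccati_solution_unique[of 0 t "\<lambda>s. K * r s" "\<lambda>s. cosine (x s) u"
        "\<lambda>s. tanh (K * integral {0..s} r + c0)"])
    show "continuous_on {0..t} (\<lambda>s. K * r s)"
      using r_cont by (rule continuous_on_mult_left)
    show "((\<lambda>s. cosine (x s) u) has_real_derivative K * r s * (1 - (cosine (x s) u)\<^sup>2))
        (at s within {0..t})" if "s \<in> {0..t}" for s
      using cosine_deriv[of s] nz that by (auto simp: K_def r_def intro: DERIV_subset)
    show "((\<lambda>s. tanh (K * integral {0..s} r + c0)) has_real_derivative
        K * r s * (1 - (tanh (K * integral {0..s} r + c0))\<^sup>2)) (at s within {0..t})"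
      if "s \<in> {0..t}" for s
      using r_cont that by (rule tanh_integral_has_real_derivative)
    show "cosine (x 0) u = tanh (K * integral {0..0} r + c0)"
      using assms(3) by (simp add: c0_def tanh_artanh_real)
  qed (rule assms(1))
  then show ?thesis
    by (simp add: K_def r_def c0_def)
qed

lemma norm_le_max:
  assumes xs_nonneg: "\<And>s. s \<ge> 0 \<Longrightarrow> xs s \<ge> 0" and "a > 0" "b \<ge> 0"
    and lower: "\<forall>r\<ge>0. \<forall>z\<ge>0. a * r - b \<le> Vr (r, z)" and "t \<ge> 0"
  shows "norm (x t) \<le> max (norm (x 0)) ((\<alpha> * norm u + b) / a)"
proof -
  define R where "R = (\<alpha> * norm u + b) / a"
  have "R \<ge> 0"
    unfolding R_def using assms alpha_pos by simp
  have "(norm (x t))\<^sup>2 \<le> max ((norm (x 0))\<^sup>2) (R\<^sup>2)"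
  proof (rule DERIV_nonpos_above_imp_le_max[OF norm_squared_deriv _ \<open>t \<ge> 0\<close>])
    fix s :: real
    assume "0 < s" "(norm (x s))\<^sup>2 > R\<^sup>2"
    define \<rho> where "\<rho> = norm (x s)"
    have "R < \<rho>"
      using \<open>(norm (x s))\<^sup>2 > R\<^sup>2\<close> unfolding \<rho>_def by (rule power_less_imp_less_base) simp
    then have "\<alpha> * norm u + b - a * \<rho> < 0"
      using \<open>a > 0\<close> unfolding R_def by (simp add: field_simps)
    have "a * \<rho> - b \<le> Vr (\<rho>, xs s)"
      using lower xs_nonneg[of s] \<open>0 < s\<close> unfolding \<rho>_def by simp
    then have "(a * \<rho> - b) * \<rho> \<le> Vr (\<rho>, xs s) * \<rho>"
      by (rule mult_right_mono) (simp add: \<rho>_def)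
    moreover have "\<alpha> * inner u (x s) \<le> \<alpha> * (norm u * \<rho>)"
      using norm_cauchy_schwarz[of u "x s"] alpha_pos unfolding \<rho>_def by simp
    ultimately have "\<alpha> * inner u (x s) - Vr (\<rho>, xs s) * \<rho>
        \<le> \<rho> * (\<alpha> * norm u + b - a * \<rho>)"
      by (simp add: algebra_simps)
    also have "\<dots> \<le> 0"
      using \<open>\<alpha> * norm u + b - a * \<rho> < 0\<close> by (simp add: \<rho>_def mult_nonneg_nonpos)
    finally show "2 * (\<alpha> * inner u (x s) - Vr (norm (x s), xs s) * norm (x s)) / \<tau> \<le> 0"
      using tau_pos unfolding \<rho>_def by (simp add: divide_nonpos_pos)
  qed
  then have "(norm (x t))\<^sup>2 \<le> (max (norm (x 0)) R)\<^sup>2"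
    using \<open>R \<ge> 0\<close> by (auto simp: max_def power_mono)
  then show ?thesis
    unfolding R_def[symmetric] using \<open>R \<ge> 0\<close> by (auto intro: power2_le_imp_le)
qed

lemma gain_mult_inner_le:
  assumes "xs t \<ge> 0" "a \<ge> 0" "b \<ge> 0"
    and lower: "\<forall>r\<ge>0. \<forall>z\<ge>0. a * r - b \<le> Vr (r, z)" and "inner u (x t) \<le> 0"
  shows "gain t * inner u (x t) \<le> b * norm u"
proof (cases "x t = 0")
  case False
  define \<rho> where "\<rho> = norm (x t)"
  define p where "p = inner u (x t)"
  have "\<rho> > 0"
    using False unfolding \<rho>_def by simp
  have "Vr (\<rho>, xs t) * p \<le> (a * \<rho> - b) * p"
    using lower assms(1,5) unfolding \<rho>_def p_def
    by (intro mult_right_mono_neg) auto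
  also have "\<dots> \<le> b * (- p)"
    using \<open>a \<ge> 0\<close> \<open>\<rho> > 0\<close> assms(5) unfolding p_def
    by (simp add: algebra_simps mult_nonneg_nonpos)
  also have "\<dots> \<le> b * (norm u * \<rho>)"
    using Cauchy_Schwarz_ineq2[of u "x t"] \<open>b \<ge> 0\<close> unfolding p_def \<rho>_def
    by (intro mult_left_mono) auto
  finally show ?thesis
    using False \<open>\<rho> > 0\<close> by (simp add: gain_def \<rho>_def[symmetric] p_def[symmetric] field_simps)
qed (use assms in \<open>simp add: gain_def\<close>)

lemma inner_u_eventually_pos:
  assumes xs_nonneg: "\<And>s. s \<ge> 0 \<Longrightarrow> xs s \<ge> 0" and "a \<ge> 0" "b \<ge> 0"
    and lower: "\<forall>r\<ge>0. \<forall>z\<ge>0. a * r - b \<le> Vr (r, z)" and "b < \<alpha> * norm u"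
  shows "\<exists>t1\<ge>0. inner u (x t1) > 0"
proof (rule ccontr)
  assume "\<not> (\<exists>t1\<ge>0. inner u (x t1) > 0)"
  then have nonpos: "inner u (x t) \<le> 0" if "t \<ge> 0" for t
    using that by (meson not_le)
  define \<delta> where "\<delta> = norm u * (\<alpha> * norm u - b)"
  have "\<delta> > 0"
    unfolding \<delta>_def using u_nz \<open>b < \<alpha> * norm u\<close> by simp
  \<comment> \<open>while inner u x is nonpositive it grows at least at the rate \<delta> / \<tau>\<close>
  define T where "T = (\<bar>inner u (x 0)\<bar> + 1) * \<tau> / \<delta>"
  have "T \<ge> 0"
    unfolding T_def using \<open>\<delta> > 0\<close> tau_pos by simp
  have "\<delta> / \<tau> * T - inner u (x T) \<le> \<delta> / \<tau> * 0 - inner u (x 0)"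
  proof (rule DERIV_nonpos_imp_le_initial[of 0 "\<lambda>s. \<delta> / \<tau> * s - inner u (x s)"])
    show "((\<lambda>s. \<delta> / \<tau> * s - inner u (x s)) has_real_derivative
        \<delta> / \<tau> - (\<alpha> * (norm u)\<^sup>2 - gain s * inner u (x s)) / \<tau>) (at s within {0..})"
      if "s \<ge> 0" for s
      using inner_u_deriv[OF that] tau_pos by (auto intro!: derivative_eq_intros)
    show "\<delta> / \<tau> - (\<alpha> * (norm u)\<^sup>2 - gain s * inner u (x s)) / \<tau> \<le> 0" if "0 < s" for s
    proof -
      have "gain s * inner u (x s) \<le> b * norm u"
        using that xs_nonneg[of s] nonpos[of s] assms(2-4) by (intro gain_mult_inner_le) auto
      then show ?thesis
        using tau_pos by (simp add: \<delta>_def divide_simps power2_eq_square algebra_simps)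
    qed
  qed (rule \<open>T \<ge> 0\<close>)
  moreover have "\<delta> / \<tau> * T = \<bar>inner u (x 0)\<bar> + 1"
    unfolding T_def using \<open>\<delta> > 0\<close> tau_pos by simp
  ultimately have "inner u (x T) > 0"
    using abs_ge_minus_self[of "inner u (x 0)"] by simp
  with nonpos[OF \<open>T \<ge> 0\<close>] show False
    by simp
qed

lemma inner_u_stays_pos:
  assumes xs_nonneg: "\<And>s. s \<ge> 0 \<Longrightarrow> xs s \<ge> 0" and "a \<ge> 0" "b \<ge> 0"
    and lower: "\<forall>r\<ge>0. \<forall>z\<ge>0. a * r - b \<le> Vr (r, z)" and "b < \<alpha> * norm u"
    and upper: "\<And>s. s \<ge> 0 \<Longrightarrow> Vr (norm (x s), xs s) \<le> H * norm (x s)" and "H \<ge> 0"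
    and "t1 \<ge> 0" "inner u (x t1) > 0" "t \<ge> t1"
  shows "inner u (x t) > 0"
proof -
  \<comment> \<open>below the level \<epsilon> the drift \<alpha> |u|^2 dominates the radial term\<close>
  define \<epsilon> where "\<epsilon> = min (inner u (x t1)) (\<alpha> * (norm u)\<^sup>2 / (H + 1))"
  have "\<epsilon> > 0"
    unfolding \<epsilon>_def using assms(9) alpha_pos u_nz \<open>H \<ge> 0\<close> by simp
  have "- inner u (x t) \<le> max (- inner u (x t1)) (- \<epsilon>)"
  proof (rule DERIV_nonpos_above_imp_le_max[of t1 "\<lambda>s. - inner u (x s)"])
    show "((\<lambda>s. - inner u (x s)) has_real_derivative
        - ((\<alpha> * (norm u)\<^sup>2 - gain s * inner u (x s)) / \<tau>)) (at s within {t1..})"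
      if "s \<ge> t1" for s
      using inner_u_deriv[of s] that \<open>t1 \<ge> 0\<close> by (auto intro!: DERIV_minus intro: DERIV_subset)
    show "- ((\<alpha> * (norm u)\<^sup>2 - gain s * inner u (x s)) / \<tau>) \<le> 0"
      if "t1 < s" "- inner u (x s) > - \<epsilon>" for s
    proof -
      have "s \<ge> 0"
        using that \<open>t1 \<ge> 0\<close> by simp
      have "gain s * inner u (x s) \<le> \<alpha> * (norm u)\<^sup>2"
      proof (cases "inner u (x s) \<le> 0")
        case True
        then have "gain s * inner u (x s) \<le> b * norm u"
          using xs_nonneg[OF \<open>s \<ge> 0\<close>] assms(2-4) by (intro gain_mult_inner_le) auto
        also have "\<dots> \<le> \<alpha> * (norm u)\<^sup>2"
          using mult_right_mono[of b "\<alpha> * norm u" "norm u"] \<open>b < \<alpha> * norm u\<close>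
          by (simp add: power2_eq_square)
        finally show ?thesis .
      next
        case False
        have "gain s \<le> H"
          using upper[OF \<open>s \<ge> 0\<close>] \<open>H \<ge> 0\<close>
          by (simp add: gain_def divide_le_eq mult.commute)
        then have "gain s * inner u (x s) \<le> H * \<epsilon>"
          using False that(2) \<open>H \<ge> 0\<close> by (intro mult_mono) auto
        also have "\<dots> \<le> H * (\<alpha> * (norm u)\<^sup>2 / (H + 1))"
          unfolding \<epsilon>_def using \<open>H \<ge> 0\<close> by (intro mult_left_mono) auto
        also have "\<dots> \<le> \<alpha> * (norm u)\<^sup>2"
          using \<open>H \<ge> 0\<close> alpha_pos by (simp add: field_simps)
        finally show ?thesis .
      qed
      then show ?thesis
        using tau_pos by simp
    qed
  qed (rule \<open>t \<ge> t1\<close>)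
  moreover have "\<epsilon> \<le> inner u (x t1)"
    unfolding \<epsilon>_def by simp
  ultimately show ?thesis
    using \<open>\<epsilon> > 0\<close> by linarith
qed

lemma cosine_tendsto_1_if_inner_pos:
  assumes "t1 \<ge> 0" and pos: "\<And>t. t \<ge> t1 \<Longrightarrow> inner u (x t) > 0"
    and bounded: "\<And>t. t \<ge> t1 \<Longrightarrow> norm (x t) \<le> R"
  shows "((\<lambda>t. cosine (x t) u) \<longlongrightarrow> 1) at_top"
proof -
  have nz: "x t \<noteq> 0" if "t \<ge> t1" for t
    using pos[OF that] by auto
  have "R > 0"
    using bounded[of t1] nz[of t1] zero_less_norm_iff[of "x t1"] by linarith
  define \<kappa> where "\<kappa> = \<alpha> * norm u / (\<tau> * R)"
  have decay: "1 - cosine (x t) u \<le> (1 - cosine (x t1) u) * exp (- \<kappa> * (t - t1))"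
    if "t \<ge> t1" for t
  proof (rule DERIV_le_neg_mult_imp_exp_decay[of t1 "\<lambda>s. 1 - cosine (x s) u"])
    show "((\<lambda>s. 1 - cosine (x s) u) has_real_derivative
        - (\<alpha> * norm u / (\<tau> * norm (x s)) * (1 - (cosine (x s) u)\<^sup>2))) (at s within {t1..})"
      if "s \<ge> t1" for s
      using cosine_deriv[of s] nz[OF that] that \<open>t1 \<ge> 0\<close>
      by (auto intro!: derivative_eq_intros intro: DERIV_subset)
    show "- (\<alpha> * norm u / (\<tau> * norm (x s)) * (1 - (cosine (x s) u)\<^sup>2))
        \<le> - \<kappa> * (1 - cosine (x s) u)" if "t1 < s" for s
    proof -
      define c where "c = cosine (x s) u"
      have "0 \<le> c" "c \<le> 1"
        using cosine_pos[OF pos[of s]] abs_cosine_le_1[of "x s" u] that unfolding c_def by auto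
      then have "1 - c \<le> 1 - c\<^sup>2"
        by (simp add: power2_eq_square mult_left_le)
      moreover have "\<kappa> \<le> \<alpha> * norm u / (\<tau> * norm (x s))"
        unfolding \<kappa>_def using bounded[of s] nz[of s] that alpha_pos tau_pos u_nz \<open>R > 0\<close>
        by (intro divide_left_mono mult_left_mono mult_pos_pos) auto
      ultimately have "\<kappa> * (1 - c) \<le> \<alpha> * norm u / (\<tau> * norm (x s)) * (1 - c\<^sup>2)"
        using \<open>c \<le> 1\<close> \<open>R > 0\<close> alpha_pos tau_pos u_nz
        by (intro mult_mono) (auto simp: \<kappa>_def)
      then show ?thesis
        unfolding c_def by simp
    qed
  qed (rule that)
  have "\<forall>\<^sub>F t in at_top.
      1 - (1 - cosine (x t1) u) * exp (- \<kappa> * (t - t1)) \<le> cosine (x t) u"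
    unfolding eventually_at_top_linorder using decay
    by (intro exI[of _ t1]) (simp add: algebra_simps)
  moreover have "\<forall>\<^sub>F t in at_top. cosine (x t) u \<le> 1"
    using abs_cosine_le_1 abs_le_iff by (intro always_eventually) blast
  moreover have "((\<lambda>t. 1 - (1 - cosine (x t1) u) * exp (- \<kappa> * (t - t1))) \<longlongrightarrow> 1) at_top"
    using \<open>R > 0\<close> alpha_pos tau_pos u_nz unfolding \<kappa>_def by real_asymp
  ultimately show ?thesis
    using tendsto_const by (rule tendsto_sandwich)
qed

lemma cosine_tendsto_1:
  assumes "\<tau>s > 0" and g_mono: "mono_on {0..} g" and g_nonneg: "\<forall>r\<ge>0. g r \<ge> 0"
    and ode_xs: "\<forall>t\<ge>0. (xs has_real_derivative
      (1 / \<tau>s) * (- xs t + g (norm (x t)))) (at t within {0..})"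
    and "xs 0 \<ge> 0" "a > 0" "b \<ge> 0" and h_nonneg: "\<forall>r\<ge>0. h r \<ge> 0"
    and lower: "\<forall>r\<ge>0. \<forall>z\<ge>0. a * r - b \<le> Vr (r, z)"
    and upper: "\<forall>rb\<ge>0. \<forall>r\<in>{0..rb}. \<forall>z\<in>{0..\<bar>xs 0\<bar> + g rb}. Vr (r, z) \<le> h rb * r"
    and "norm u > b / \<alpha>"
  shows "((\<lambda>t. cosine (x t) u) \<longlongrightarrow> 1) at_top"
proof -
  have xs_nonneg: "xs t \<ge> 0" if "t \<ge> 0" for t
    by (rule first_order_lag_nonneg[of \<tau>s xs "\<lambda>t. g (norm (x t))"])
      (use assms(1,5) ode_xs g_nonneg that in auto)
  define R where "R = max (norm (x 0)) ((\<alpha> * norm u + b) / a)"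
  have "R \<ge> 0"
    unfolding R_def by (simp add: le_max_iff_disj)
  have norm_le: "norm (x t) \<le> R" if "t \<ge> 0" for t
    unfolding R_def using xs_nonneg assms(6,7) lower that by (rule norm_le_max)
  have xs_le: "xs t \<le> \<bar>xs 0\<bar> + g R" if "t \<ge> 0" for t
  proof (rule first_order_lag_le[of \<tau>s xs "\<lambda>t. g (norm (x t))" "g R"])
    show "g (norm (x s)) \<le> g R" if "s \<ge> 0" for s
      using g_mono norm_le[OF that] \<open>R \<ge> 0\<close> by (auto intro: mono_onD)
  qed (use assms(1) ode_xs g_nonneg \<open>R \<ge> 0\<close> that in auto)
  have upper_R: "Vr (norm (x t), xs t) \<le> h R * norm (x t)" if "t \<ge> 0" for t
    using upper \<open>R \<ge> 0\<close> norm_le[OF that] xs_nonneg[OF that] xs_le[OF that] by simp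
  have "b < \<alpha> * norm u"
    using \<open>norm u > b / \<alpha>\<close> alpha_pos by (simp add: field_simps)
  then obtain t1 where "t1 \<ge> 0" "inner u (x t1) > 0"
    using inner_u_eventually_pos[OF xs_nonneg _ _ lower] assms(6,7) by fastforce
  show ?thesis
  proof (rule cosine_tendsto_1_if_inner_pos[of t1 R])
    show "inner u (x t) > 0" if "t \<ge> t1" for t
      using inner_u_stays_pos[OF xs_nonneg _ _ lower \<open>b < \<alpha> * norm u\<close> upper_R _
          \<open>t1 \<ge> 0\<close> \<open>inner u (x t1) > 0\<close> that] assms(6,7) h_nonneg \<open>R \<ge> 0\<close>
      by simp
    show "norm (x t) \<le> R" if "t \<ge> t1" for t
      using norm_le that \<open>t1 \<ge> 0\<close> by simp
  qed (rule \<open>t1 \<ge> 0\<close>)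
qed

end

theorem theorem2:
  fixes V Vr Vs :: "real \<times> real \<Rightarrow> real"
    and g :: "real \<Rightarrow> real"
    and x :: "real \<Rightarrow> 'a::{real_inner, complete_space}"
    and xs :: "real \<Rightarrow> real"
    and u :: 'a
    and \<tau> \<tau>s \<alpha> :: real
  assumes tau_pos: "\<tau> > 0" and taus_pos: "\<tau>s > 0" and alpha_pos: "\<alpha> > 0"
    and g_cont: "continuous_on {0..} g" and g_mono: "mono_on {0..} g"
    and g_nonneg: "\<forall>r\<ge>0. g r \<ge> 0" and g0: "g 0 = 0"
    and V_C1: "\<forall>p. (V has_derivative (\<lambda>(h, k). Vr p * h + Vs p * k)) (at p)"
    and Vr_cont: "continuous_on UNIV Vr" and Vs_cont: "continuous_on UNIV Vs"
    and u_nz: "u \<noteq> 0"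
    and ode_x: "\<forall>t\<ge>0. (x has_vector_derivative
                  (1 / \<tau>) *\<^sub>R (- radial_grad Vr (x t) (xs t) + \<alpha> *\<^sub>R u)) (at t within {0..})"
    and ode_xs: "\<forall>t\<ge>0. (xs has_real_derivative
                  (1 / \<tau>s) * (- xs t + g (norm (x t)))) (at t within {0..})"
  shows
    "(\<forall>t\<ge>0. x t \<noteq> 0 \<longrightarrow>
        (\<exists>D. ((\<lambda>s. cosine (x s) u) has_real_derivative D) (at t within {0..}) \<and>
             (\<tau> / \<alpha>) * D = norm u / norm (x t) * (1 - (cosine (x t) u)\<^sup>2)))
     \<and> (\<forall>t\<ge>0. (\<forall>s\<in>{0..t}. x s \<noteq> 0) \<and> cosine (x 0) u \<in> {-1<..<1} \<longrightarrow>
          cosine (x t) u =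
            tanh (\<alpha> * norm u / \<tau> * integral {0..t} (\<lambda>s. 1 / norm (x s))
                  + artanh (cosine (x 0) u)))
     \<and> (\<forall>(a::real) (b::real) (h::real \<Rightarrow> real).
          xs 0 \<ge> 0 \<and> a > 0 \<and> b \<ge> 0 \<and>
          continuous_on {0..} h \<and> mono_on {0..} h \<and> (\<forall>r\<ge>0. h r \<ge> 0) \<and> h 0 = 0 \<and>
          (\<forall>r\<ge>0. \<forall>z\<ge>0. a * r - b \<le> Vr (r, z)) \<and>
          (\<forall>rb\<ge>0. \<forall>r\<in>{0..rb}. \<forall>z\<in>{0..\<bar>xs 0\<bar> + g rb}. Vr (r, z) \<le> h rb * r) \<and>
          norm u > b / \<alpha>
          \<longrightarrow> ((\<lambda>t. cosine (x t) u) \<longlongrightarrow> 1) at_top)"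
proof -
  interpret biased_radial_flow Vr x xs u \<tau> \<alpha>
    using tau_pos alpha_pos u_nz ode_x by unfold_locales
  have "\<exists>D. ((\<lambda>s. cosine (x s) u) has_real_derivative D) (at t within {0..}) \<and>
      (\<tau> / \<alpha>) * D = norm u / norm (x t) * (1 - (cosine (x t) u)\<^sup>2)"
    if "t \<ge> 0" "x t \<noteq> 0" for t
    using cosine_deriv[OF that] tau_pos alpha_pos that(2)
    by (intro exI conjI) (auto simp: field_simps)
  moreover have "cosine (x t) u = tanh (\<alpha> * norm u / \<tau> * integral {0..t} (\<lambda>s. 1 / norm (x s))
      + artanh (cosine (x 0) u))"
    if "t \<ge> 0" "(\<forall>s\<in>{0..t}. x s \<noteq> 0) \<and> cosine (x 0) u \<in> {-1<..<1}" for t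
    using that by (elim conjE) (rule cosine_eq_tanh_integral)
  moreover have "((\<lambda>t. cosine (x t) u) \<longlongrightarrow> 1) at_top"
    if "xs 0 \<ge> 0 \<and> a > 0 \<and> b \<ge> 0 \<and>
      continuous_on {0..} h \<and> mono_on {0..} h \<and> (\<forall>r\<ge>0. h r \<ge> 0) \<and> h 0 = 0 \<and>
      (\<forall>r\<ge>0. \<forall>z\<ge>0. a * r - b \<le> Vr (r, z)) \<and>
      (\<forall>rb\<ge>0. \<forall>r\<in>{0..rb}. \<forall>z\<in>{0..\<bar>xs 0\<bar> + g rb}. Vr (r, z) \<le> h rb * r) \<and>
      norm u > b / \<alpha>" for a b :: real and h :: "real \<Rightarrow> real"
    using that by (elim conjE) (rule cosine_tendsto_1[OF taus_pos g_mono g_nonneg ode_xs])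
  ultimately show ?thesis
    by blast
qed

end
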